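(* Let $R$ be a Noetherian local ring and $M$ a finitely generated weakly reflexive $R$-module. Then the iterated dual $M^{\ell\ast}$ is reflexive for every $\ell\in\mathbb{N}$.
   Context: $M^\ast=\operatorname{Hom}_R(M,R)$; $M^{\ell\ast}$ is the $\ell$-fold iterated dual. $M$ is weakly reflexive if the natural map $M\to M^{\ast\ast}$ is surjective, and reflexive if it is bijective. *)

theory Defs
  imports "HOL-Algebra.Module" "HOL-Algebra.Ring_Divisibility" "HOL-Algebra.Ideal"
begin

definition lin_maps :: "'a ring \<Rightarrow> ('a, 'm) module \<Rightarrow> ('a, 'n) module \<Rightarrow> ('m \<Rightarrow> 'n) set" where
  "lin_maps R M N = {f. f \<in> carrier M \<rightarrow>\<^sub>E carrier N \<and>
      (\<forall>x\<in>carrier M. \<forall>y\<in>carrier M. f (x \<oplus>\<^bsub>M\<^esub> y) = f x \<oplus>\<^bsub>N\<^esub> f y) \<and>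
      (\<forall>a\<in>carrier R. \<forall>x\<in>carrier M. f (a \<odot>\<^bsub>M\<^esub> x) = a \<odot>\<^bsub>N\<^esub> f x)}"

definition ring_module :: "'a ring \<Rightarrow> ('a, 'a) module" where
  "ring_module R = \<lparr>carrier = carrier R, mult = mult R, one = one R,
      zero = zero R, add = add R, smult = mult R\<rparr>"

text \<open>The dual module \<open>M\<^sup>* = Hom_R(M,R)\<close> with pointwise operations.
  (The multiplicative ring fields of the record are irrelevant for modules.)\<close>
definition dual :: "'a ring \<Rightarrow> ('a, 'm) module \<Rightarrow> ('a, 'm \<Rightarrow> 'a) module" where
  "dual R M = \<lparr>carrier = lin_maps R M (ring_module R),
      mult = (\<lambda>f g. undefined), one = undefined,
      zero = (\<lambda>x\<in>carrier M. \<zero>\<^bsub>R\<^esub>),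
      add = (\<lambda>f g. \<lambda>x\<in>carrier M. f x \<oplus>\<^bsub>R\<^esub> g x),
      smult = (\<lambda>a f. \<lambda>x\<in>carrier M. a \<otimes>\<^bsub>R\<^esub> f x)\<rparr>"

definition nat_map :: "'a ring \<Rightarrow> ('a, 'm) module \<Rightarrow> 'm \<Rightarrow> (('m \<Rightarrow> 'a) \<Rightarrow> 'a)" where
  "nat_map R M x = (\<lambda>f\<in>carrier (dual R M). f x)"

definition weakly_reflexive :: "'a ring \<Rightarrow> ('a, 'm) module \<Rightarrow> bool" where
  "weakly_reflexive R M \<longleftrightarrow> nat_map R M ` carrier M = carrier (dual R (dual R M))"

definition reflexive :: "'a ring \<Rightarrow> ('a, 'm) module \<Rightarrow> bool" where
  "reflexive R M \<longleftrightarrow> bij_betw (nat_map R M) (carrier M) (carrier (dual R (dual R M)))"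

definition fin_gen :: "'a ring \<Rightarrow> ('a, 'm) module \<Rightarrow> bool" where
  "fin_gen R M \<longleftrightarrow> (\<exists>A. finite A \<and> A \<subseteq> carrier M \<and>
      carrier M = {finsum M (\<lambda>x. c x \<odot>\<^bsub>M\<^esub> x) A | c. c \<in> A \<rightarrow> carrier R})"

definition local_ring :: "'a ring \<Rightarrow> bool" where
  "local_ring R \<longleftrightarrow> cring R \<and> (\<exists>!I. maximalideal I R)"

definition module_iso :: "'a ring \<Rightarrow> ('a, 'm) module \<Rightarrow> ('a, 'n) module \<Rightarrow> bool" where
  "module_iso R M N \<longleftrightarrow> (\<exists>f \<in> lin_maps R M N. bij_betw f (carrier M) (carrier N))"

end

theory Submission
  imports Defs
begin

(* Write ev_X : X -> X** for the evaluation map nat_map and eps for the transpose X*** -> X* of ev_X.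
   Then eps is always a left inverse of the evaluation map of X*, which is therefore injective; if ev_X
   is onto, eps is injective too, hence the evaluation map of X* is bijective: the dual of a weakly
   reflexive module is reflexive.  Both properties are invariant under isomorphism, because an
   isomorphism phi induces an isomorphism phi** of biduals with phi** o ev_A = ev_B o phi. *)

(* Closure under the operations is all the duality arguments use; it passes to X* directly,
   without proving that X* satisfies the module axioms. *)
definition module_ops_closed :: "'a ring \<Rightarrow> ('a, 'm) module \<Rightarrow> bool" where
  "module_ops_closed R X \<longleftrightarrow>
     (\<forall>x\<in>carrier X. \<forall>y\<in>carrier X. x \<oplus>\<^bsub>X\<^esub> y \<in> carrier X) \<and>
     (\<forall>a\<in>carrier R. \<forall>x\<in>carrier X. a \<odot>\<^bsub>X\<^esub> x \<in> carrier X)"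

lemma module_ops_closed_add:
  "module_ops_closed R X \<Longrightarrow> x \<in> carrier X \<Longrightarrow> y \<in> carrier X \<Longrightarrow> x \<oplus>\<^bsub>X\<^esub> y \<in> carrier X"
  by (simp add: module_ops_closed_def)

lemma module_ops_closed_smult:
  "module_ops_closed R X \<Longrightarrow> a \<in> carrier R \<Longrightarrow> x \<in> carrier X \<Longrightarrow> a \<odot>\<^bsub>X\<^esub> x \<in> carrier X"
  by (simp add: module_ops_closed_def)

lemma module_imp_module_ops_closed: "module R X \<Longrightarrow> module_ops_closed R X"
  unfolding module_ops_closed_def
  by (meson abelian_group.axioms(1) abelian_monoid.a_closed module.smult_closed module_def)

lemma lin_mapsI:
  assumes "\<phi> \<in> carrier A \<rightarrow>\<^sub>E carrier B"
    and "\<And>x y. x \<in> carrier A \<Longrightarrow> y \<in> carrier A \<Longrightarrow> \<phi> (x \<oplus>\<^bsub>A\<^esub> y) = \<phi> x \<oplus>\<^bsub>B\<^esub> \<phi> y"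
    and "\<And>a x. a \<in> carrier R \<Longrightarrow> x \<in> carrier A \<Longrightarrow> \<phi> (a \<odot>\<^bsub>A\<^esub> x) = a \<odot>\<^bsub>B\<^esub> \<phi> x"
  shows "\<phi> \<in> lin_maps R A B"
  using assms by (simp add: lin_maps_def)

lemma lin_maps_closed: "\<phi> \<in> lin_maps R A B \<Longrightarrow> x \<in> carrier A \<Longrightarrow> \<phi> x \<in> carrier B"
  by (auto simp: lin_maps_def)

lemma lin_maps_add:
  "\<phi> \<in> lin_maps R A B \<Longrightarrow> x \<in> carrier A \<Longrightarrow> y \<in> carrier A \<Longrightarrow> \<phi> (x \<oplus>\<^bsub>A\<^esub> y) = \<phi> x \<oplus>\<^bsub>B\<^esub> \<phi> y"
  by (simp add: lin_maps_def)

lemma lin_maps_smult: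
  "\<phi> \<in> lin_maps R A B \<Longrightarrow> a \<in> carrier R \<Longrightarrow> x \<in> carrier A \<Longrightarrow> \<phi> (a \<odot>\<^bsub>A\<^esub> x) = a \<odot>\<^bsub>B\<^esub> \<phi> x"
  by (simp add: lin_maps_def)

lemma lin_maps_inv_into:
  assumes A: "module_ops_closed R A" and \<phi>: "\<phi> \<in> lin_maps R A B"
    and bij: "bij_betw \<phi> (carrier A) (carrier B)"
  shows "restrict (inv_into (carrier A) \<phi>) (carrier B) \<in> lin_maps R B A"
proof -
  let ?\<psi> = "inv_into (carrier A) \<phi>"
  have \<psi>_closed: "?\<psi> y \<in> carrier A" if "y \<in> carrier B" for y
    using bij that by (metis bij_betw_imp_surj_on inv_into_into)
  have \<psi>_eqI: "?\<psi> y = x" if "x \<in> carrier A" "\<phi> x = y" for x y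
    using bij that by (metis bij_betw_inv_into_left)
  have \<phi>_\<psi>: "\<phi> (?\<psi> y) = y" if "y \<in> carrier B" for y
    using bij that by (rule bij_betw_inv_into_right)
  show ?thesis
  proof (rule lin_mapsI)
    fix y y' assume y: "y \<in> carrier B" and y': "y' \<in> carrier B"
    have "\<phi> (?\<psi> y \<oplus>\<^bsub>A\<^esub> ?\<psi> y') = y \<oplus>\<^bsub>B\<^esub> y'"
      using lin_maps_add[OF \<phi> \<psi>_closed[OF y] \<psi>_closed[OF y']] \<phi>_\<psi> y y' by simp
    then show "restrict ?\<psi> (carrier B) (y \<oplus>\<^bsub>B\<^esub> y') =
        restrict ?\<psi> (carrier B) y \<oplus>\<^bsub>A\<^esub> restrict ?\<psi> (carrier B) y'"
      using \<psi>_eqI module_ops_closed_add[OF A \<psi>_closed[OF y] \<psi>_closed[OF y']] y y'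
        lin_maps_closed[OF \<phi>] by (metis restrict_apply')
  next
    fix a y assume a: "a \<in> carrier R" and y: "y \<in> carrier B"
    have "\<phi> (a \<odot>\<^bsub>A\<^esub> ?\<psi> y) = a \<odot>\<^bsub>B\<^esub> y"
      using lin_maps_smult[OF \<phi> a \<psi>_closed[OF y]] \<phi>_\<psi> y by simp
    then show "restrict ?\<psi> (carrier B) (a \<odot>\<^bsub>B\<^esub> y) = a \<odot>\<^bsub>A\<^esub> restrict ?\<psi> (carrier B) y"
      using \<psi>_eqI module_ops_closed_smult[OF A a \<psi>_closed[OF y]] y
        lin_maps_closed[OF \<phi>] by (metis restrict_apply')
  qed (use \<psi>_closed in auto)
qed

lemma module_iso_sym:
  assumes A: "module_ops_closed R A" and iso: "module_iso R A B"
  shows "module_iso R B A"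
proof -
  obtain \<phi> where \<phi>: "\<phi> \<in> lin_maps R A B" and bij: "bij_betw \<phi> (carrier A) (carrier B)"
    using iso by (auto simp: module_iso_def)
  have "bij_betw (restrict (inv_into (carrier A) \<phi>) (carrier B)) (carrier B) (carrier A)"
    using bij_betw_inv_into[OF bij] by simp
  with lin_maps_inv_into[OF A \<phi> bij] show ?thesis
    unfolding module_iso_def by blast
qed

lemma carrier_dual_iff:
  "f \<in> carrier (dual R X) \<longleftrightarrow> f \<in> carrier X \<rightarrow>\<^sub>E carrier R \<and>
     (\<forall>x\<in>carrier X. \<forall>y\<in>carrier X. f (x \<oplus>\<^bsub>X\<^esub> y) = f x \<oplus>\<^bsub>R\<^esub> f y) \<and>
     (\<forall>a\<in>carrier R. \<forall>x\<in>carrier X. f (a \<odot>\<^bsub>X\<^esub> x) = a \<otimes>\<^bsub>R\<^esub> f x)"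
  by (simp add: dual_def lin_maps_def ring_module_def)

lemma dual_add: "f \<oplus>\<^bsub>dual R X\<^esub> g = (\<lambda>x\<in>carrier X. f x \<oplus>\<^bsub>R\<^esub> g x)"
  by (simp add: dual_def)

lemma dual_smult: "a \<odot>\<^bsub>dual R X\<^esub> f = (\<lambda>x\<in>carrier X. a \<otimes>\<^bsub>R\<^esub> f x)"
  by (simp add: dual_def)

lemma dual_apply_closed: "f \<in> carrier (dual R X) \<Longrightarrow> x \<in> carrier X \<Longrightarrow> f x \<in> carrier R"
  by (auto simp: carrier_dual_iff)

lemma dual_apply_add:
  "f \<in> carrier (dual R X) \<Longrightarrow> x \<in> carrier X \<Longrightarrow> y \<in> carrier X \<Longrightarrow>
    f (x \<oplus>\<^bsub>X\<^esub> y) = f x \<oplus>\<^bsub>R\<^esub> f y"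
  by (simp add: carrier_dual_iff)

lemma dual_apply_smult:
  "f \<in> carrier (dual R X) \<Longrightarrow> a \<in> carrier R \<Longrightarrow> x \<in> carrier X \<Longrightarrow>
    f (a \<odot>\<^bsub>X\<^esub> x) = a \<otimes>\<^bsub>R\<^esub> f x"
  by (simp add: carrier_dual_iff)

lemma dual_eqI:
  assumes "f \<in> carrier (dual R X)" "g \<in> carrier (dual R X)"
    and "\<And>x. x \<in> carrier X \<Longrightarrow> f x = g x"
  shows "f = g"
  using assms by (auto simp: carrier_dual_iff intro: PiE_ext)

lemma dual_memI:
  assumes "f \<in> carrier X \<rightarrow>\<^sub>E carrier R"
    and "\<And>x y. x \<in> carrier X \<Longrightarrow> y \<in> carrier X \<Longrightarrow> f (x \<oplus>\<^bsub>X\<^esub> y) = f x \<oplus>\<^bsub>R\<^esub> f y"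
    and "\<And>a x. a \<in> carrier R \<Longrightarrow> x \<in> carrier X \<Longrightarrow> f (a \<odot>\<^bsub>X\<^esub> x) = a \<otimes>\<^bsub>R\<^esub> f x"
  shows "f \<in> carrier (dual R X)"
  using assms by (simp add: carrier_dual_iff)

lemma dual_module_ops_closed:
  fixes R (structure)
  assumes R: "cring R" and X: "module_ops_closed R X"
  shows "module_ops_closed R (dual R X)"
  unfolding module_ops_closed_def
proof (intro conjI ballI)
  interpret cring R by (rule R)
  fix f g assume f: "f \<in> carrier (dual R X)" and g: "g \<in> carrier (dual R X)"
  note fg = dual_apply_closed[OF f] dual_apply_closed[OF g]
  show "f \<oplus>\<^bsub>dual R X\<^esub> g \<in> carrier (dual R X)"
    unfolding dual_add
  proof (rule dual_memI)
    fix x y assume x: "x \<in> carrier X" and y: "y \<in> carrier X"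
    have "f x \<oplus> f y \<oplus> (g x \<oplus> g y) = f x \<oplus> g x \<oplus> (f y \<oplus> g y)"
      using fg x y by (simp add: a_ac)
    then show "(\<lambda>x\<in>carrier X. f x \<oplus> g x) (x \<oplus>\<^bsub>X\<^esub> y) =
        (\<lambda>x\<in>carrier X. f x \<oplus> g x) x \<oplus> (\<lambda>x\<in>carrier X. f x \<oplus> g x) y"
      using x y module_ops_closed_add[OF X x y] by (simp add: dual_apply_add[OF f] dual_apply_add[OF g])
  next
    fix a x assume a: "a \<in> carrier R" and x: "x \<in> carrier X"
    then show "(\<lambda>x\<in>carrier X. f x \<oplus> g x) (a \<odot>\<^bsub>X\<^esub> x) = a \<otimes> (\<lambda>x\<in>carrier X. f x \<oplus> g x) x"
      using fg module_ops_closed_smult[OF X a x]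
      by (simp add: dual_apply_smult[OF f] dual_apply_smult[OF g] r_distr)
  qed (use fg in auto)
next
  interpret cring R by (rule R)
  fix a f assume a: "a \<in> carrier R" and f: "f \<in> carrier (dual R X)"
  note fc = dual_apply_closed[OF f]
  show "a \<odot>\<^bsub>dual R X\<^esub> f \<in> carrier (dual R X)"
    unfolding dual_smult
  proof (rule dual_memI)
    fix x y assume x: "x \<in> carrier X" and y: "y \<in> carrier X"
    then show "(\<lambda>x\<in>carrier X. a \<otimes> f x) (x \<oplus>\<^bsub>X\<^esub> y) =
        (\<lambda>x\<in>carrier X. a \<otimes> f x) x \<oplus> (\<lambda>x\<in>carrier X. a \<otimes> f x) y"
      using a fc module_ops_closed_add[OF X x y] by (simp add: dual_apply_add[OF f] r_distr)
  next
    fix b x assume b: "b \<in> carrier R" and x: "x \<in> carrier X"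
    then show "(\<lambda>x\<in>carrier X. a \<otimes> f x) (b \<odot>\<^bsub>X\<^esub> x) = b \<otimes> (\<lambda>x\<in>carrier X. a \<otimes> f x) x"
      using a fc module_ops_closed_smult[OF X b x] by (simp add: dual_apply_smult[OF f] m_lcomm)
  qed (use a fc in auto)
qed

abbreviation bidual :: "'a ring \<Rightarrow> ('a, 'm) module \<Rightarrow> ('a, ('m \<Rightarrow> 'a) \<Rightarrow> 'a) module" where
  "bidual R X \<equiv> dual R (dual R X)"

lemma nat_map_apply: "f \<in> carrier (dual R X) \<Longrightarrow> nat_map R X x f = f x"
  by (simp add: nat_map_def)

lemma nat_map_lin_maps:
  assumes R: "cring R" and X: "module_ops_closed R X"
  shows "restrict (nat_map R X) (carrier X) \<in> lin_maps R X (bidual R X)"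
proof (rule lin_mapsI)
  have D: "module_ops_closed R (dual R X)"
    using dual_module_ops_closed[OF R X] .
  have "nat_map R X x \<in> carrier (bidual R X)" if x: "x \<in> carrier X" for x
  proof (rule dual_memI)
    show "nat_map R X x \<in> carrier (dual R X) \<rightarrow>\<^sub>E carrier R"
      using x dual_apply_closed by (auto simp: nat_map_def)
  next
    fix f g assume "f \<in> carrier (dual R X)" "g \<in> carrier (dual R X)"
    then show "nat_map R X x (f \<oplus>\<^bsub>dual R X\<^esub> g) = nat_map R X x f \<oplus>\<^bsub>R\<^esub> nat_map R X x g"
      using x module_ops_closed_add[OF D] by (simp add: nat_map_apply dual_add)
  next
    fix a f assume "a \<in> carrier R" "f \<in> carrier (dual R X)"
    then show "nat_map R X x (a \<odot>\<^bsub>dual R X\<^esub> f) = a \<otimes>\<^bsub>R\<^esub> nat_map R X x f"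
      using x module_ops_closed_smult[OF D] by (simp add: nat_map_apply dual_smult)
  qed
  then show "restrict (nat_map R X) (carrier X) \<in> carrier X \<rightarrow>\<^sub>E carrier (bidual R X)"
    by simp
next
  fix x y assume "x \<in> carrier X" "y \<in> carrier X"
  then show "restrict (nat_map R X) (carrier X) (x \<oplus>\<^bsub>X\<^esub> y) =
      restrict (nat_map R X) (carrier X) x \<oplus>\<^bsub>bidual R X\<^esub> restrict (nat_map R X) (carrier X) y"
    using module_ops_closed_add[OF X]
    by (auto simp: nat_map_def dual_add dual_apply_add intro!: restrict_ext)
next
  fix a x assume "a \<in> carrier R" "x \<in> carrier X"
  then show "restrict (nat_map R X) (carrier X) (a \<odot>\<^bsub>X\<^esub> x) =
      a \<odot>\<^bsub>bidual R X\<^esub> restrict (nat_map R X) (carrier X) x"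
    using module_ops_closed_smult[OF X]
    by (auto simp: nat_map_def dual_smult dual_apply_smult intro!: restrict_ext)
qed

lemma nat_map_in_bidual:
  "cring R \<Longrightarrow> module_ops_closed R X \<Longrightarrow> x \<in> carrier X \<Longrightarrow> nat_map R X x \<in> carrier (bidual R X)"
  using lin_maps_closed[OF nat_map_lin_maps] by fastforce

definition dual_map ::
    "'a ring \<Rightarrow> ('a, 'm) module \<Rightarrow> ('a, 'n) module \<Rightarrow> ('m \<Rightarrow> 'n) \<Rightarrow> ('n \<Rightarrow> 'a) \<Rightarrow> ('m \<Rightarrow> 'a)" where
  "dual_map R A B \<phi> = (\<lambda>g\<in>carrier (dual R B). \<lambda>x\<in>carrier A. g (\<phi> x))"

lemma dual_map_apply:
  "g \<in> carrier (dual R B) \<Longrightarrow> x \<in> carrier A \<Longrightarrow> dual_map R A B \<phi> g x = g (\<phi> x)"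
  by (simp add: dual_map_def)

lemma dual_map_restrict [simp]: "dual_map R A B (restrict \<phi> (carrier A)) = dual_map R A B \<phi>"
  by (auto simp: dual_map_def intro!: restrict_ext)

lemma dual_map_in_dual:
  assumes A: "module_ops_closed R A" and \<phi>: "\<phi> \<in> lin_maps R A B" and g: "g \<in> carrier (dual R B)"
  shows "dual_map R A B \<phi> g \<in> carrier (dual R A)"
proof (rule dual_memI)
  show "dual_map R A B \<phi> g \<in> carrier A \<rightarrow>\<^sub>E carrier R"
    using g dual_apply_closed[OF g lin_maps_closed[OF \<phi>]] by (simp add: dual_map_def)
next
  fix x y assume "x \<in> carrier A" "y \<in> carrier A"
  then show "dual_map R A B \<phi> g (x \<oplus>\<^bsub>A\<^esub> y) = dual_map R A B \<phi> g x \<oplus>\<^bsub>R\<^esub> dual_map R A B \<phi> g y"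
    using g module_ops_closed_add[OF A] lin_maps_closed[OF \<phi>]
    by (simp add: dual_map_apply lin_maps_add[OF \<phi>] dual_apply_add)
next
  fix a x assume "a \<in> carrier R" "x \<in> carrier A"
  then show "dual_map R A B \<phi> g (a \<odot>\<^bsub>A\<^esub> x) = a \<otimes>\<^bsub>R\<^esub> dual_map R A B \<phi> g x"
    using g module_ops_closed_smult[OF A] lin_maps_closed[OF \<phi>]
    by (simp add: dual_map_apply lin_maps_smult[OF \<phi>] dual_apply_smult)
qed

lemma dual_map_lin_maps:
  assumes R: "cring R" and A: "module_ops_closed R A" and B: "module_ops_closed R B"
    and \<phi>: "\<phi> \<in> lin_maps R A B"
  shows "dual_map R A B \<phi> \<in> lin_maps R (dual R B) (dual R A)"
proof (rule lin_mapsI)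
  show "dual_map R A B \<phi> \<in> carrier (dual R B) \<rightarrow>\<^sub>E carrier (dual R A)"
    using dual_map_in_dual[OF A \<phi>] by (simp add: dual_map_def)
next
  fix g h assume "g \<in> carrier (dual R B)" "h \<in> carrier (dual R B)"
  then show "dual_map R A B \<phi> (g \<oplus>\<^bsub>dual R B\<^esub> h) =
      dual_map R A B \<phi> g \<oplus>\<^bsub>dual R A\<^esub> dual_map R A B \<phi> h"
    using module_ops_closed_add[OF dual_module_ops_closed[OF R B]] lin_maps_closed[OF \<phi>]
    by (auto simp: dual_map_def dual_add intro!: restrict_ext)
next
  fix a g assume "a \<in> carrier R" "g \<in> carrier (dual R B)"
  then show "dual_map R A B \<phi> (a \<odot>\<^bsub>dual R B\<^esub> g) = a \<odot>\<^bsub>dual R A\<^esub> dual_map R A B \<phi> g"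
    using module_ops_closed_smult[OF dual_module_ops_closed[OF R B]] lin_maps_closed[OF \<phi>]
    by (auto simp: dual_map_def dual_smult intro!: restrict_ext)
qed

lemma inj_on_dual_map:
  assumes surj: "\<phi> ` carrier A = carrier B"
  shows "inj_on (dual_map R A B \<phi>) (carrier (dual R B))"
proof (rule inj_onI)
  fix g h assume g: "g \<in> carrier (dual R B)" and h: "h \<in> carrier (dual R B)"
    and eq: "dual_map R A B \<phi> g = dual_map R A B \<phi> h"
  show "g = h"
  proof (rule dual_eqI[OF g h])
    fix y assume "y \<in> carrier B"
    then obtain x where x: "x \<in> carrier A" and y: "y = \<phi> x"
      using surj by blast
    have "dual_map R A B \<phi> g x = dual_map R A B \<phi> h x"
      using eq by simp
    then show "g y = h y"
      using g h x y by (simp add: dual_map_apply)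
  qed
qed

lemma dual_map_dual_map:
  assumes B: "module_ops_closed R B"
    and \<phi>: "\<phi> \<in> lin_maps R A B" and \<psi>: "\<psi> \<in> lin_maps R B A"
    and inv: "\<And>x. x \<in> carrier A \<Longrightarrow> \<psi> (\<phi> x) = x" and g: "g \<in> carrier (dual R A)"
  shows "dual_map R A B \<phi> (dual_map R B A \<psi> g) = g"
proof -
  have \<psi>g: "dual_map R B A \<psi> g \<in> carrier (dual R B)"
    using dual_map_in_dual[OF B \<psi> g] .
  show ?thesis
    using \<psi>g g lin_maps_closed[OF \<phi>]
    by (auto simp: dual_map_def inv carrier_dual_iff intro: PiE_ext)
qed

lemma bij_betw_dual_map:
  assumes R: "cring R" and A: "module_ops_closed R A" and B: "module_ops_closed R B"
    and \<phi>: "\<phi> \<in> lin_maps R A B" and bij: "bij_betw \<phi> (carrier A) (carrier B)"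
  shows "bij_betw (dual_map R A B \<phi>) (carrier (dual R B)) (carrier (dual R A))"
  unfolding bij_betw_def
proof
  show "inj_on (dual_map R A B \<phi>) (carrier (dual R B))"
    using inj_on_dual_map bij_betw_imp_surj_on[OF bij] .
  let ?\<psi> = "restrict (inv_into (carrier A) \<phi>) (carrier B)"
  have \<psi>: "?\<psi> \<in> lin_maps R B A"
    using lin_maps_inv_into[OF A \<phi> bij] .
  have inv: "?\<psi> (\<phi> x) = x" if "x \<in> carrier A" for x
    using that bij by (simp add: bij_betw_inv_into_left lin_maps_closed[OF \<phi>])
  show "dual_map R A B \<phi> ` carrier (dual R B) = carrier (dual R A)"
  proof (intro equalityI subsetI)
    fix g assume "g \<in> carrier (dual R A)"
    then show "g \<in> dual_map R A B \<phi> ` carrier (dual R B)"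
      using dual_map_dual_map[OF B \<phi> \<psi> inv] dual_map_in_dual[OF B \<psi>] by (metis image_eqI)
  qed (use dual_map_in_dual[OF A \<phi>] in auto)
qed

lemma bidual_map_nat_map:
  assumes R: "cring R" and A: "module_ops_closed R A"
    and \<phi>: "\<phi> \<in> lin_maps R A B" and x: "x \<in> carrier A"
  shows "dual_map R (dual R B) (dual R A) (dual_map R A B \<phi>) (nat_map R A x) = nat_map R B (\<phi> x)"
  using nat_map_in_bidual[OF R A x] dual_map_in_dual[OF A \<phi>] x
  by (auto simp: dual_map_def nat_map_def intro!: restrict_ext)

lemma module_iso_bidual:
  assumes R: "cring R" and A: "module_ops_closed R A" and B: "module_ops_closed R B"
    and iso: "module_iso R A B"
  obtains \<phi> \<Phi> where "bij_betw \<phi> (carrier A) (carrier B)"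
    and "bij_betw \<Phi> (carrier (bidual R A)) (carrier (bidual R B))"
    and "\<And>x. x \<in> carrier A \<Longrightarrow> \<Phi> (nat_map R A x) = nat_map R B (\<phi> x)"
proof -
  obtain \<phi> where \<phi>: "\<phi> \<in> lin_maps R A B" and bij: "bij_betw \<phi> (carrier A) (carrier B)"
    using iso by (auto simp: module_iso_def)
  have "bij_betw (dual_map R (dual R B) (dual R A) (dual_map R A B \<phi>))
      (carrier (bidual R A)) (carrier (bidual R B))"
    using bij_betw_dual_map[OF R dual_module_ops_closed[OF R B] dual_module_ops_closed[OF R A]
        dual_map_lin_maps[OF R A B \<phi>] bij_betw_dual_map[OF R A B \<phi> bij]] .
  with bij show thesis
    using that bidual_map_nat_map[OF R A \<phi>] by blast
qed

lemma weakly_reflexive_iso: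
  assumes "cring R" "module_ops_closed R A" "module_ops_closed R B"
    and "module_iso R A B" and "weakly_reflexive R A"
  shows "weakly_reflexive R B"
proof -
  obtain \<phi> \<Phi> where \<phi>: "bij_betw \<phi> (carrier A) (carrier B)"
    and \<Phi>: "bij_betw \<Phi> (carrier (bidual R A)) (carrier (bidual R B))"
    and nat: "\<And>x. x \<in> carrier A \<Longrightarrow> \<Phi> (nat_map R A x) = nat_map R B (\<phi> x)"
    using module_iso_bidual[OF assms(1-4)] by metis
  have "nat_map R B ` carrier B = nat_map R B ` \<phi> ` carrier A"
    using bij_betw_imp_surj_on[OF \<phi>] by simp
  also have "\<dots> = \<Phi> ` nat_map R A ` carrier A"
    by (simp add: image_image nat cong: image_cong)
  also have "\<dots> = carrier (bidual R B)"
    using assms(5) bij_betw_imp_surj_on[OF \<Phi>] unfolding weakly_reflexive_def by simp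
  finally show ?thesis
    unfolding weakly_reflexive_def .
qed

lemma reflexive_iso:
  assumes "cring R" "module_ops_closed R A" "module_ops_closed R B"
    and "module_iso R A B" and "reflexive R A"
  shows "reflexive R B"
proof -
  obtain \<phi> \<Phi> where \<phi>: "bij_betw \<phi> (carrier A) (carrier B)"
    and \<Phi>: "bij_betw \<Phi> (carrier (bidual R A)) (carrier (bidual R B))"
    and nat: "\<And>x. x \<in> carrier A \<Longrightarrow> \<Phi> (nat_map R A x) = nat_map R B (\<phi> x)"
    using module_iso_bidual[OF assms(1-4)] by metis
  have "bij_betw (\<Phi> \<circ> nat_map R A) (carrier A) (carrier (bidual R B))"
    using bij_betw_trans[OF assms(5)[unfolded reflexive_def] \<Phi>] .
  then have "bij_betw (nat_map R B \<circ> \<phi>) (carrier A) (carrier (bidual R B))"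
    using bij_betw_cong[of "carrier A" "\<Phi> \<circ> nat_map R A" "nat_map R B \<circ> \<phi>"] nat by simp
  then show ?thesis
    using bij_betw_comp_iff[OF \<phi>] unfolding reflexive_def by blast
qed

lemma reflexive_imp_weakly_reflexive: "reflexive R X \<Longrightarrow> weakly_reflexive R X"
  by (simp add: reflexive_def weakly_reflexive_def bij_betw_imp_surj_on)

lemma dual_map_nat_map_nat_map:
  assumes R: "cring R" and X: "module_ops_closed R X" and f: "f \<in> carrier (dual R X)"
  shows "dual_map R X (bidual R X) (nat_map R X) (nat_map R (dual R X) f) = f"
proof (rule dual_eqI)
  have D: "module_ops_closed R (dual R X)"
    using dual_module_ops_closed[OF R X] .
  show "dual_map R X (bidual R X) (nat_map R X) (nat_map R (dual R X) f) \<in> carrier (dual R X)"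
    using dual_map_in_dual[OF X nat_map_lin_maps[OF R X] nat_map_in_bidual[OF R D f]] by simp
  fix x assume "x \<in> carrier X"
  then show "dual_map R X (bidual R X) (nat_map R X) (nat_map R (dual R X) f) x = f x"
    using nat_map_in_bidual[OF R D f] nat_map_in_bidual[OF R X] f
    by (simp add: dual_map_apply nat_map_apply)
qed (use f in simp)

lemma weakly_reflexive_imp_reflexive_dual:
  assumes R: "cring R" and X: "module_ops_closed R X" and W: "weakly_reflexive R X"
  shows "reflexive R (dual R X)"
proof -
  let ?\<epsilon> = "dual_map R X (bidual R X) (nat_map R X)"
  have D: "module_ops_closed R (dual R X)"
    using dual_module_ops_closed[OF R X] .
  have \<epsilon>_in_dual: "?\<epsilon> \<Phi> \<in> carrier (dual R X)" if "\<Phi> \<in> carrier (dual R (bidual R X))" for \<Phi>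
    using dual_map_in_dual[OF X nat_map_lin_maps[OF R X] that] by simp
  have inj_\<epsilon>: "inj_on ?\<epsilon> (carrier (dual R (bidual R X)))"
    using inj_on_dual_map W unfolding weakly_reflexive_def by blast
  have "nat_map R (dual R X) ` carrier (dual R X) = carrier (bidual R (dual R X))"
  proof (intro equalityI subsetI)
    fix \<Phi> assume \<Phi>: "\<Phi> \<in> carrier (bidual R (dual R X))"
    have "?\<epsilon> (nat_map R (dual R X) (?\<epsilon> \<Phi>)) = ?\<epsilon> \<Phi>"
      using dual_map_nat_map_nat_map[OF R X \<epsilon>_in_dual[OF \<Phi>]] .
    then have "nat_map R (dual R X) (?\<epsilon> \<Phi>) = \<Phi>"
      using inj_onD[OF inj_\<epsilon>] \<Phi> nat_map_in_bidual[OF R D \<epsilon>_in_dual[OF \<Phi>]] by blast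
    then show "\<Phi> \<in> nat_map R (dual R X) ` carrier (dual R X)"
      using \<epsilon>_in_dual[OF \<Phi>] by (metis image_eqI)
  qed (use nat_map_in_bidual[OF R D] in auto)
  moreover have "inj_on (nat_map R (dual R X)) (carrier (dual R X))"
    using dual_map_nat_map_nat_map[OF R X] by (metis inj_on_inverseI)
  ultimately show ?thesis
    unfolding reflexive_def bij_betw_def by blast
qed

theorem proposition5p12:
  fixes R :: "'a ring" and M :: "('a, 'm) module"
    and N :: "nat \<Rightarrow> ('a, 'u) module" and l :: nat
  assumes "noetherian_ring R" and "local_ring R"
    and "module R M" and "fin_gen R M" and "weakly_reflexive R M"
    and "\<forall>i. module R (N i)"
    and "module_iso R M (N 0)"
    and "\<forall>i. module_iso R (N (Suc i)) (dual R (N i))"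
    and "l \<ge> 1"
  shows "reflexive R (N l)"
proof -
  have R: "cring R"
    using assms(2) by (simp add: local_ring_def)
  have M: "module_ops_closed R M" and N: "\<And>i. module_ops_closed R (N i)"
    using assms(3,6) module_imp_module_ops_closed by blast+
  have step: "reflexive R (N (Suc i))" if "weakly_reflexive R (N i)" for i
    using reflexive_iso[OF R dual_module_ops_closed[OF R N] N
        module_iso_sym[OF N assms(8)[rule_format]]
        weakly_reflexive_imp_reflexive_dual[OF R N that]] .
  have "weakly_reflexive R (N i)" for i
  proof (induction i)
    case 0
    show ?case
      using weakly_reflexive_iso[OF R M N assms(7,5)] .
  next
    case (Suc i)
    then show ?case
      using step reflexive_imp_weakly_reflexive by blast
  qed
  moreover obtain k where "l = Suc k"
    using assms(9) by (cases l) auto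
  ultimately show ?thesis
    using step by blast
qed

end
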